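(* Let $\triangle PQR$ be a (closed, filled) triangle in $D$ and write $\psi=\psi_{\triangle PQR}$. The following are equivalent: (1) there exists $\alpha\in S^1$ with $\psi^5(\alpha)=\alpha$; (2) $\rho(\psi)=\frac{2}{5}$; (3) there exist five points $\alpha_0<\alpha_1<\alpha_2<\alpha_3<\alpha_4$ in $[0,1)$ such that $\psi(\pi(\alpha_i))=\pi(\alpha_j)$ whenever $j\equiv i+2 \pmod 5$; (4) there exists $\alpha\in S^1$ such that $\overline{\psi}^5(x)=x+2$ for $x\in\pi^{-1}(\alpha)$, where $\overline\psi$ is the lift of $\psi$ with $\overline\psi(0)\in[0,1)$.
   Context: $D$ is the open unit disk in $\mathbb R^2$, $S^1$ its boundary circle identified with $\mathbb R/\mathbb Z$ via the counterclockwise normalized angle, and $\pi:\mathbb R\to S^1$, $\pi(x)=x-\lfloor x\rfloor$. For a closed convex $U\subset D$ and $v\in S^1$, $\psi_U(v)$ is the point $w\in S^1\setminus\{v\}$ such that the line $vw$ meets $U$ and $U$ lies in the closed half-plane to the left of the directed line from $v$ to $w$; it is an orientation-preserving homeomorphism of $S^1$. For such $f$, $\rho(f)=\lim_{n\to\infty}(\overline f^n(x)-x)/n$ with $\overline f$ the lift to $\mathbb R$ satisfying $\overline f(0)\in[0,1)$. *)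

theory Defs
  imports "HOL-Analysis.Analysis"
begin

text \<open>S^1 is identified with [0,1) via the normalized counterclockwise angle;
  the point of the unit circle with normalized angle t is circ t.
  The projection pi from the reals to S^1 is frac.\<close>
definition circ :: "real \<Rightarrow> complex" where
  "circ t = cis (2 * pi * t)"

text \<open>Signed cross product: nonnegative iff z lies in the closed half-plane to
  the left of the directed line from a to b (for a \<noteq> b); zero iff z lies on the line.\<close>
definition cross3 :: "complex \<Rightarrow> complex \<Rightarrow> complex \<Rightarrow> real" where
  "cross3 a b z = Im (cnj (b - a) * (z - a))"

definition psi :: "complex set \<Rightarrow> real \<Rightarrow> real" where
  "psi U v = (THE w. w \<in> {0..<1} \<and> w \<noteq> v \<and>
      (\<exists>u\<in>U. cross3 (circ v) (circ w) u = 0) \<and>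
      (\<forall>u\<in>U. cross3 (circ v) (circ w) u \<ge> 0))"

definition lift :: "(real \<Rightarrow> real) \<Rightarrow> real \<Rightarrow> real" where
  "lift f = (THE F. continuous_on UNIV F \<and> (\<forall>x. frac (F x) = f (frac x)) \<and> F 0 \<in> {0..<1})"

definition rot_num :: "(real \<Rightarrow> real) \<Rightarrow> real" where
  "rot_num f = (THE r. \<forall>x. (\<lambda>n. (((lift f) ^^ n) x - x) / real n) \<longlonglongrightarrow> r)"

end

theory Submission
  imports Defs
begin

text \<open>The chord from circ x through a point V of the disk
  ends at circ (chord_end V x), where chord_end V is an increasing degree-one lift whose
  square is the translation by 1; the supporting line of a polygon from circ x is the chord
  through the vertex whose chord ends first, so the lift of \<psi> is the minimum F of the
  chord_end V over the vertices.

  A point of period 5 of \<psi> lifts to F^5 \<alpha> = \<alpha> + m. Then m \<ge> 1 because F moves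
  every point forward, m \<le> 2 because F^5 \<le> chord_end V ^ 5 = chord_end V + 2, and m \<noteq> 1
  because going once around the circle in five steps would need five different vertices.
  For a continuous monotone degree-one lift, rotation number p/q is equivalent to
  F^q \<alpha> = \<alpha> + p for some \<alpha> (intermediate value theorem), and such an orbit, read
  modulo 1, consists of five points in cyclic order each sent two places ahead.\<close>

section \<open>Lifts of degree-one circle maps\<close>

lemma lift_eqI:
  assumes G: "continuous_on UNIV G" "\<And>x. frac (G x) = f (frac x)" "G 0 \<in> {0..<1}"
  shows "lift f = G"
  unfolding lift_def
proof (rule the_equality)
  show "continuous_on UNIV G \<and> (\<forall>x. frac (G x) = f (frac x)) \<and> G 0 \<in> {0..<1}"
    using G by blast
next
  fix H assume H: "continuous_on UNIV H \<and> (\<forall>x. frac (H x) = f (frac x)) \<and> H 0 \<in> {0..<1}"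
  define D where "D x = H x - G x" for x
  have D_Ints: "D x \<in> \<int>" for x
    using H G(2)[of x] frac_eqE[of "H x" "G x"] by (metis D_def Ints_of_int add_diff_cancel_left')
  have "D constant_on UNIV"
  proof (rule continuous_discrete_range_constant)
    show "continuous_on UNIV D"
      unfolding D_def using H G(1) by (intro continuous_intros) auto
    show "\<exists>e>0. \<forall>y. y \<in> UNIV \<and> D y \<noteq> D x \<longrightarrow> e \<le> norm (D y - D x)" for x
      by (rule exI[of _ 1]) (auto intro!: Ints_nonzero_abs_ge1 Ints_diff D_Ints)
  qed simp
  moreover have "D 0 = 0"
  proof -
    obtain n where "D 0 = of_int n" using D_Ints[of 0] by (auto elim: Ints_cases)
    moreover have "\<bar>D 0\<bar> < 1" using H G(3) by (auto simp: D_def)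
    ultimately show ?thesis by simp
  qed
  ultimately have "D x = 0" for x by (metis constant_on_def UNIV_I)
  then show "H = G" by (auto simp: D_def fun_eq_iff)
qed

lemma funpow_frac_semiconj:
  fixes g F :: "real \<Rightarrow> real"
  assumes "\<And>y. g (frac y) = frac (F y)"
  shows "(g ^^ n) (frac y) = frac ((F ^^ n) y)"
  by (induction n) (auto simp: assms)

locale degree_one_lift =
  fixes F :: "real \<Rightarrow> real"
  assumes mono: "mono F"
    and add_one: "F (x + 1) = F x + 1"
    and self_le: "x \<le> F x"
    and le_add_one: "F x \<le> x + 1"
begin

lemma add_of_int: "F (x + of_int k) = F x + of_int k"
proof (induction k rule: int_induct[where k = 0])
  case (step1 i)
  then show ?case using add_one[of "x + of_int i"] by (simp add: add.assoc)
next
  case (step2 i)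
  then show ?case using add_one[of "x + of_int (i - 1)"] by (simp add: algebra_simps)
qed simp

lemma funpow_add_of_int: "(F ^^ n) (x + of_int k) = (F ^^ n) x + of_int k"
  by (induction n) (simp_all add: add_of_int)

lemma funpow_add_one: "(F ^^ n) (x + 1) = (F ^^ n) x + 1"
  using funpow_add_of_int[of n x 1] by simp

definition displacement :: "nat \<Rightarrow> real \<Rightarrow> real" where
  "displacement n x = (F ^^ n) x - x"

lemma displacement_add_of_int: "displacement n (x + of_int k) = displacement n x"
  by (simp add: displacement_def funpow_add_of_int)

lemma displacement_add: "displacement (m + n) x = displacement m ((F ^^ n) x) + displacement n x"
  by (simp add: displacement_def funpow_add)

lemma displacement_bounds: "0 \<le> displacement n x" "displacement n x \<le> real n"
proof -
  have "x \<le> (F ^^ n) x \<and> (F ^^ n) x \<le> x + real n" for x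
  proof (induction n arbitrary: x)
    case (Suc n)
    have "(F ^^ Suc n) x = (F ^^ n) (F x)" by (simp only: funpow_Suc_right comp_def)
    then show ?case using Suc[of "F x"] self_le[of x] le_add_one[of x] by auto
  qed simp
  from this[of x] show "0 \<le> displacement n x" "displacement n x \<le> real n"
    by (auto simp: displacement_def)
qed

text \<open>Translating y by an integer into [x, x + 1] and using monotonicity of the iterate.\<close>
lemma displacement_oscillation: "\<bar>displacement n x - displacement n y\<bar> \<le> 1"
proof -
  define y' where "y' = y - of_int \<lfloor>y - x\<rfloor>"
  have y': "x \<le> y'" "y' \<le> x + 1"
    using of_int_floor_le[of "y - x"] real_of_int_floor_add_one_gt[of "y - x"]
    unfolding y'_def by linarith+
  have "(F ^^ n) x \<le> (F ^^ n) y'" "(F ^^ n) y' \<le> (F ^^ n) (x + 1)"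
    using funpow_mono[OF mono] y' by auto
  then have "\<bar>displacement n x - displacement n y'\<bar> \<le> 1"
    using y' by (auto simp: displacement_def funpow_add_one)
  moreover have "displacement n y' = displacement n y"
    using displacement_add_of_int[of n y "- \<lfloor>y - x\<rfloor>"] by (simp add: y'_def)
  ultimately show ?thesis by simp
qed

lemma displacement_mult: "\<bar>displacement (k * q) x - real k * displacement q 0\<bar> \<le> real k"
proof (induction k)
  case (Suc k)
  have "displacement (Suc k * q) x = displacement q ((F ^^ (k * q)) x) + displacement (k * q) x"
    using displacement_add[of q "k * q" x] by (simp add: add.commute)
  then show ?case
    using Suc displacement_oscillation[of q "(F ^^ (k * q)) x" 0] by (simp add: algebra_simps)
qed (simp add: displacement_def)

lemma average_displacement_close:
  assumes "0 < n" "0 < q"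
  shows "\<bar>displacement n x / n - displacement q 0 / q\<bar> \<le> 1 / q + q / n"
proof -
  define k r where "k = n div q" and "r = n mod q"
  have n: "n = r + k * q" and "r < q"
    using assms by (simp_all add: k_def r_def)
  have "real k \<le> n / q"
    using div_times_less_eq_dividend[of n q] assms
    by (simp add: k_def field_simps flip: of_nat_mult)
  have "\<bar>displacement n x - n * displacement q 0 / q\<bar> \<le> k + r"
  proof -
    have "displacement n x = displacement r ((F ^^ (k * q)) x) + displacement (k * q) x"
      using n displacement_add by metis
    moreover have "n * displacement q 0 / q = k * displacement q 0 + r * (displacement q 0 / q)"
      using assms by (simp add: n field_simps)
    moreover have "0 \<le> r * (displacement q 0 / q)" "r * (displacement q 0 / q) \<le> r"
    proof -
      have "0 \<le> displacement q 0 / q" "displacement q 0 / q \<le> 1"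
        using displacement_bounds[of q 0] assms by simp_all
      then show "0 \<le> r * (displacement q 0 / q)" "r * (displacement q 0 / q) \<le> r"
        using mult_left_le[of "displacement q 0 / q" "real r"]
          mult_nonneg_nonneg[of "real r" "displacement q 0 / q"] by auto
    qed
    ultimately show ?thesis
      using displacement_mult[of k q x] displacement_bounds[of r "(F ^^ (k * q)) x"] by linarith
  qed
  also have "\<dots> \<le> n / q + q"
    using \<open>real k \<le> n / q\<close> \<open>r < q\<close> by simp
  finally have "\<bar>displacement n x - n * displacement q 0 / q\<bar> / n \<le> (n / q + q) / n"
    by (simp add: divide_right_mono)
  moreover have "displacement n x / n - displacement q 0 / q
      = (displacement n x - n * displacement q 0 / q) / n"
    using assms by (simp add: field_simps)
  ultimately show ?thesis
    using assms by (simp add: abs_divide add_divide_distrib)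
qed

lemma Cauchy_average_displacement: "Cauchy (\<lambda>n. displacement n x / n)"
proof (rule metric_CauchyI)
  fix e :: real assume "0 < e"
  obtain q :: nat where q: "4 / e < q" using reals_Archimedean2 by blast
  obtain N :: nat where N: "4 * q / e < N" using reals_Archimedean2 by blast
  have "0 < q" using q \<open>0 < e\<close> by (metis divide_pos_pos of_nat_0_less_iff order.strict_trans zero_less_numeral)
  have "1 / q < e / 4" using q \<open>0 < e\<close> \<open>0 < q\<close> by (simp add: field_simps)
  have close: "\<bar>displacement n x / n - displacement q 0 / q\<bar> < e / 2" if "N \<le> n" for n
  proof -
    have "4 * q / e < n" using N that by linarith
    moreover have "0 < 4 * q / e" using \<open>0 < e\<close> \<open>0 < q\<close> by simp
    ultimately have "0 < real n" by linarith
    then have "0 < n" "q / n < e / 4"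
      using \<open>4 * q / e < n\<close> \<open>0 < e\<close> by (simp_all add: field_simps)
    then show ?thesis
      using average_displacement_close[of n q x] \<open>0 < q\<close> \<open>1 / q < e / 4\<close> by linarith
  qed
  show "\<exists>N. \<forall>m\<ge>N. \<forall>n\<ge>N. dist (displacement m x / m) (displacement n x / n) < e"
  proof (intro exI allI impI)
    fix m n assume "N \<le> m" "N \<le> n"
    with close[of m] close[of n]
    show "dist (displacement m x / m) (displacement n x / n) < e"
      unfolding dist_real_def by linarith
  qed
qed

definition rotation_number :: real where
  "rotation_number = (THE r. \<forall>x. (\<lambda>n. ((F ^^ n) x - x) / real n) \<longlonglongrightarrow> r)"

lemma tendsto_rotation_number: "(\<lambda>n. ((F ^^ n) x - x) / real n) \<longlonglongrightarrow> rotation_number"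
proof -
  obtain r where r: "(\<lambda>n. displacement n 0 / n) \<longlonglongrightarrow> r"
    using Cauchy_average_displacement convergent_def Cauchy_convergent_iff by blast
  have "(\<lambda>n. displacement n x / n) \<longlonglongrightarrow> r" for x
  proof -
    have "\<bar>displacement n x / n - displacement n 0 / n\<bar> \<le> 1 / n" for n
      using displacement_oscillation[of n x 0]
      by (simp add: diff_divide_distrib[symmetric] abs_divide divide_right_mono)
    then have "(\<lambda>n. displacement n x / n - displacement n 0 / n) \<longlonglongrightarrow> 0"
      by (intro Lim_null_comparison[OF _ lim_const_over_n[of 1]]) (simp add: always_eventually)
    from tendsto_add[OF this r] show ?thesis by simp
  qed
  then have lim: "\<forall>x. (\<lambda>n. ((F ^^ n) x - x) / real n) \<longlonglongrightarrow> r"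
    by (simp add: displacement_def)
  have "rotation_number = r"
    unfolding rotation_number_def
  proof (rule the_equality)
    fix r' assume "\<forall>x. (\<lambda>n. ((F ^^ n) x - x) / real n) \<longlonglongrightarrow> r'"
    from this[rule_format, of 0] lim[rule_format, of 0] show "r' = r" by (rule LIMSEQ_unique)
  qed (fact lim)
  with lim show ?thesis by simp
qed

lemma rot_num_eq_rotation_number: "lift f = F \<Longrightarrow> rot_num f = rotation_number"
  by (simp add: rot_num_def rotation_number_def)

lemma tendsto_rotation_number_multiples:
  assumes "0 < q"
  shows "(\<lambda>k. ((F ^^ (k * q)) x - x) / real k / q) \<longlonglongrightarrow> rotation_number"
proof -
  have "strict_mono (\<lambda>k. k * q)" using assms by (auto simp: strict_mono_def)
  from LIMSEQ_subseq_LIMSEQ[OF tendsto_rotation_number this] show ?thesis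
    by (simp add: comp_def divide_divide_eq_left)
qed

lemma rotation_number_ge:
  assumes "0 < q" and c: "\<And>y. y + c \<le> (F ^^ q) y"
  shows "c / q \<le> rotation_number"
proof -
  have bound: "x + real k * c \<le> (F ^^ (k * q)) x" for k x
  proof (induction k)
    case (Suc k)
    have "(F ^^ (Suc k * q)) x = (F ^^ q) ((F ^^ (k * q)) x)"
      by (simp add: funpow_add)
    then show ?case using c[of "(F ^^ (k * q)) x"] Suc by (simp add: algebra_simps)
  qed simp
  have "c / q \<le> ((F ^^ (k * q)) 0 - 0) / real k / q" if "1 \<le> k" for k
    using bound[of 0 k] that assms(1) by (simp add: divide_right_mono pos_le_divide_eq mult.commute)
  then show ?thesis
    by (intro LIMSEQ_le_const[OF tendsto_rotation_number_multiples[OF assms(1)]]) blast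
qed

lemma rotation_number_le:
  assumes "0 < q" and c: "\<And>y. (F ^^ q) y \<le> y + c"
  shows "rotation_number \<le> c / q"
proof -
  have bound: "(F ^^ (k * q)) x \<le> x + real k * c" for k x
  proof (induction k)
    case (Suc k)
    have "(F ^^ (Suc k * q)) x = (F ^^ q) ((F ^^ (k * q)) x)"
      by (simp add: funpow_add)
    then show ?case using c[of "(F ^^ (k * q)) x"] Suc by (simp add: algebra_simps)
  qed simp
  have "((F ^^ (k * q)) 0 - 0) / real k / q \<le> c / q" if "1 \<le> k" for k
    using bound[of k 0] that assms(1) by (simp add: divide_right_mono pos_divide_le_eq mult.commute)
  then show ?thesis
    by (intro LIMSEQ_le_const2[OF tendsto_rotation_number_multiples[OF assms(1)]]) blast
qed

lemma rotation_number_eq_of_periodic: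
  assumes "0 < q" and "(F ^^ q) \<alpha> = \<alpha> + of_int p"
  shows "rotation_number = p / q"
proof -
  have "(F ^^ (k * q)) \<alpha> = \<alpha> + of_int (int k * p)" for k
  proof (induction k)
    case (Suc k)
    have "(F ^^ (Suc k * q)) \<alpha> = (F ^^ q) ((F ^^ (k * q)) \<alpha>)"
      by (simp add: funpow_add)
    then show ?case
      using Suc assms(2) funpow_add_of_int[of q \<alpha> "int k * p"] by (simp add: algebra_simps)
  qed simp
  then have "((F ^^ (k * q)) \<alpha> - \<alpha>) / real k / q = p / q" if "1 \<le> k" for k
    using that by simp
  then have "(\<lambda>k. ((F ^^ (k * q)) \<alpha> - \<alpha>) / real k / q) \<longlonglongrightarrow> p / q"
    by (intro tendsto_eventually) (auto simp: eventually_sequentially)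
  then show ?thesis
    using tendsto_rotation_number_multiples[OF assms(1)] LIMSEQ_unique by blast
qed

lemma displacement_frac: "displacement q (frac y) = displacement q y"
  using displacement_add_of_int[of q y "- \<lfloor>y\<rfloor>"] by (simp add: frac_def)

lemma continuous_displacement:
  assumes "continuous_on UNIV F"
  shows "continuous_on UNIV (displacement q)"
proof -
  have "continuous_on UNIV (F ^^ q)"
    by (induction q) (auto intro: continuous_on_compose2[OF assms] continuous_on_id)
  then show ?thesis unfolding displacement_def by (intro continuous_intros)
qed

text \<open>A continuous periodic function takes its extrema over [0, 1] globally.\<close>
lemma displacement_attains_bounds:
  assumes "continuous_on UNIV F"
  obtains x0 x1 where "\<And>y. displacement q x0 \<le> displacement q y"
    "\<And>y. displacement q y \<le> displacement q x1"
proof -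
  have "continuous_on {0..1} (displacement q)"
    using continuous_displacement[OF assms] by (rule continuous_on_subset) simp
  then obtain x0 x1 where "\<forall>z\<in>{0..1}. displacement q x0 \<le> displacement q z"
    "\<forall>z\<in>{0..1}. displacement q z \<le> displacement q x1"
    using continuous_attains_inf[of "{0..1}" "displacement q"]
      continuous_attains_sup[of "{0..1}" "displacement q"] by auto
  moreover have "frac y \<in> {0..1}" for y by (simp add: less_imp_le[OF frac_lt_1])
  ultimately show thesis
    using that[of x0 x1] displacement_frac by metis
qed

lemma rotation_number_eq_iff:
  assumes "continuous_on UNIV F" and "0 < q"
  shows "rotation_number = p / q \<longleftrightarrow> (\<exists>\<alpha>\<in>{0..<1}. (F ^^ q) \<alpha> = \<alpha> + of_int p)"
proof
  assume rot: "rotation_number = p / q"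
  obtain x0 x1 where x0: "\<And>y. displacement q x0 \<le> displacement q y"
    and x1: "\<And>y. displacement q y \<le> displacement q x1"
    using displacement_attains_bounds[OF assms(1)] by blast
  have lower: "y + displacement q x0 \<le> (F ^^ q) y" and upper: "(F ^^ q) y \<le> y + displacement q x1"
    for y using x0[of y] x1[of y] by (simp_all add: displacement_def)
  have "displacement q x0 / q \<le> p / q" "p / q \<le> displacement q x1 / q"
    using rotation_number_ge[OF assms(2) lower] rotation_number_le[OF assms(2) upper] rot
    by simp_all
  then have "displacement q x0 \<le> p" "p \<le> displacement q x1"
    using assms(2) by (simp_all add: divide_le_cancel)
  then have "real_of_int p \<in> range (displacement q)"
    by (rule connectedD_interval[OF connected_continuous_image[OF
          continuous_displacement[OF assms(1)] connected_UNIV] rangeI rangeI])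
  then obtain y where "displacement q (frac y) = p" by (metis imageE displacement_frac)
  then have "(F ^^ q) (frac y) = frac y + of_int p" by (simp add: displacement_def)
  moreover have "frac y \<in> {0..<1}" by (simp add: frac_lt_1)
  ultimately show "\<exists>\<alpha>\<in>{0..<1}. (F ^^ q) \<alpha> = \<alpha> + of_int p" by blast
next
  assume "\<exists>\<alpha>\<in>{0..<1}. (F ^^ q) \<alpha> = \<alpha> + of_int p"
  then obtain \<alpha> where "(F ^^ q) \<alpha> = \<alpha> + of_int p" by blast
  then show "rotation_number = p / q" by (rule rotation_number_eq_of_periodic[OF assms(2)])
qed

lemma funpow_eq_add_on_fibre:
  assumes "\<alpha> \<in> {0..<1}"
  shows "(\<forall>x. frac x = \<alpha> \<longrightarrow> (F ^^ q) x = x + of_int p) \<longleftrightarrow> (F ^^ q) \<alpha> = \<alpha> + of_int p"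
proof
  assume \<alpha>: "(F ^^ q) \<alpha> = \<alpha> + of_int p"
  show "\<forall>x. frac x = \<alpha> \<longrightarrow> (F ^^ q) x = x + of_int p"
  proof (intro allI impI)
    fix x assume "frac x = \<alpha>"
    then have "x = \<alpha> + of_int \<lfloor>x\<rfloor>" by (simp add: frac_def)
    then show "(F ^^ q) x = x + of_int p"
      using funpow_add_of_int[of q \<alpha> "\<lfloor>x\<rfloor>"] \<alpha> by simp
  qed
next
  assume "\<forall>x. frac x = \<alpha> \<longrightarrow> (F ^^ q) x = x + of_int p"
  then show "(F ^^ q) \<alpha> = \<alpha> + of_int p" using frac_eq_id[OF assms] by blast
qed

end

section \<open>Orbits of rotation number 2/5\<close>

definition two_fifths_orbit :: "(real \<Rightarrow> real) \<Rightarrow> (nat \<Rightarrow> real) \<Rightarrow> bool" where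
  "two_fifths_orbit g a \<longleftrightarrow> (\<forall>i<5. a i \<in> {0..<1}) \<and> (\<forall>i<4. a i < a (Suc i)) \<and>
     (\<forall>i<5. g (frac (a i)) = frac (a ((i + 2) mod 5)))"

lemma all_less_five: "(\<forall>i<5::nat. P i) \<longleftrightarrow> P 0 \<and> P 1 \<and> P 2 \<and> P 3 \<and> P 4"
  by (auto simp: numeral_eq_Suc less_Suc_eq)

lemma all_less_four: "(\<forall>i<4::nat. P i) \<longleftrightarrow> P 0 \<and> P 1 \<and> P 2 \<and> P 3"
  by (auto simp: numeral_eq_Suc less_Suc_eq)

lemma two_fifths_orbit_funpow:
  assumes "two_fifths_orbit g a"
  shows "(g ^^ 5) (a 0) = a 0"
proof -
  have step: "g (a i) = a ((i + 2) mod 5)" if "i < 5" for i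
  proof -
    have "a i \<in> {0..<1}" "a ((i + 2) mod 5) \<in> {0..<1}"
      "g (frac (a i)) = frac (a ((i + 2) mod 5))"
      using assms that unfolding two_fifths_orbit_def by auto
    then show ?thesis by simp
  qed
  have "g (a 0) = a 2" "g (a 1) = a 3" "g (a 2) = a 4" "g (a 3) = a 0" "g (a 4) = a 1"
    using step[of 0] step[of 1] step[of 2] step[of 3] step[of 4]
    by (simp_all add: numeral_2_eq_2)
  moreover have "(g ^^ 5) (a 0) = g (g (g (g (g (a 0)))))"
    by (simp add: numeral_eq_Suc)
  ultimately show ?thesis by simp
qed

lemma frac_diff_one: "frac (x - 1) = frac x"
  by (metis diff_add_cancel frac_1_eq)

text \<open>Five points in cyclic order on the circle, listed from a lift c0 of the first,
  are renumbered so that they increase in [0, 1).\<close>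
lemma two_fifths_orbit_of_cyclic_order:
  assumes "0 \<le> c0" "c0 < 1"
    and "c0 < c1" "c1 < c2" "c2 < c3" "c3 < c4" "c4 < c0 + 1"
    and "g (frac c0) = frac c2" "g (frac c1) = frac c3" "g (frac c2) = frac c4"
      "g (frac c3) = frac c0" "g (frac c4) = frac c1"
  shows "\<exists>a. two_fifths_orbit g a"
proof -
  consider "c4 < 1" | "c3 < 1" "1 \<le> c4" | "c2 < 1" "1 \<le> c3" | "c1 < 1" "1 \<le> c2" | "1 \<le> c1"
    by linarith
  then show ?thesis
  proof cases
    case 1
    show ?thesis
      by (rule exI[of _ "\<lambda>i. [c0, c1, c2, c3, c4] ! i"])
        (use 1 assms in \<open>simp add: two_fifths_orbit_def all_less_five all_less_four\<close>)
  next
    case 2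
    show ?thesis
      by (rule exI[of _ "\<lambda>i. [c4 - 1, c0, c1, c2, c3] ! i"])
        (use 2 assms in \<open>simp add: two_fifths_orbit_def all_less_five all_less_four frac_diff_one\<close>)
  next
    case 3
    show ?thesis
      by (rule exI[of _ "\<lambda>i. [c3 - 1, c4 - 1, c0, c1, c2] ! i"])
        (use 3 assms in \<open>simp add: two_fifths_orbit_def all_less_five all_less_four frac_diff_one\<close>)
  next
    case 4
    show ?thesis
      by (rule exI[of _ "\<lambda>i. [c2 - 1, c3 - 1, c4 - 1, c0, c1] ! i"])
        (use 4 assms in \<open>simp add: two_fifths_orbit_def all_less_five all_less_four frac_diff_one\<close>)
  next
    case 5
    show ?thesis
      by (rule exI[of _ "\<lambda>i. [c1 - 1, c2 - 1, c3 - 1, c4 - 1, c0] ! i"])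
        (use 5 assms in \<open>simp add: two_fifths_orbit_def all_less_five all_less_four frac_diff_one\<close>)
  qed
qed


context degree_one_lift
begin

text \<open>Rotation number 2/5 forces the cyclic order \<alpha>, F^3 \<alpha>, F \<alpha>, F^4 \<alpha>, F^2 \<alpha> of the
  orbit modulo 1.\<close>
lemma periodic_orbit_interleaving:
  assumes strict: "strict_mono F" and moves: "\<And>x. x < F x"
    and periodic: "(F ^^ 5) \<alpha> = \<alpha> + 2"
  defines "x \<equiv> \<lambda>k. (F ^^ k) \<alpha>"
  shows "x 0 + 1 < x 3" "x 3 < x 1 + 1" "x 1 + 1 < x 4" "x 4 < x 2 + 1" "x 2 < x 0 + 1"
proof -
  have x_add: "x (k + m) = (F ^^ m) (x k)" for k m
    unfolding x_def by (metis add.commute comp_apply funpow_add)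
  have x_Suc: "x (Suc k) = F (x k)" for k
    by (simp add: x_def)
  have x_mono: "x k < x (Suc k)" for k
    using moves by (simp add: x_Suc)
  have x5: "x 5 = x 0 + 2" using periodic by (simp add: x_def)
  have strict_iter: "strict_mono (F ^^ m)" for m
    by (induction m) (auto simp: strict_mono_def strict[THEN strict_monoD])
  have shift_lt: "x j < x k + 1 \<Longrightarrow> x (j + m) < x (k + m) + 1"
    and shift_gt: "x k + 1 < x j \<Longrightarrow> x (k + m) + 1 < x (j + m)" for j k m
    using strict_monoD[OF strict_iter[of m], of "x j" "x k + 1"]
      strict_monoD[OF strict_iter[of m], of "x k + 1" "x j"] funpow_add_one[of m "x k"]
    by (simp_all add: x_add)
  have shift_le: "x j \<le> x k + 1 \<Longrightarrow> x (j + m) \<le> x (k + m) + 1"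
    and shift_ge: "x k + 1 \<le> x j \<Longrightarrow> x (k + m) + 1 \<le> x (j + m)" for j k m
    using funpow_mono[OF mono, of "x j" "x k + 1" m] funpow_mono[OF mono, of "x k + 1" "x j" m]
      funpow_add_one[of m "x k"]
    by (simp_all add: x_add)
  show first: "x 2 < x 0 + 1"
  proof (rule ccontr)
    assume "\<not> x 2 < x 0 + 1"
    then have "x 0 + 1 \<le> x 2" by simp
    with shift_ge[of 0 2 2] have "x 2 + 1 \<le> x 4" by (simp add: numeral_eq_Suc)
    then show False using \<open>x 0 + 1 \<le> x 2\<close> x_mono[of 4] x5 by simp
  qed
  show second: "x 0 + 1 < x 3"
  proof (rule ccontr)
    assume "\<not> x 0 + 1 < x 3"
    then have "x 3 \<le> x 0 + 1" by simp
    with shift_le[of 3 0 3] have "x 6 \<le> x 3 + 1" by (simp add: numeral_eq_Suc)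
    then show False using \<open>x 3 \<le> x 0 + 1\<close> x_mono[of 5] x5 by simp
  qed
  show "x 3 < x 1 + 1" "x 4 < x 2 + 1"
    using shift_lt[OF first, of 1] shift_lt[OF first, of 2] by (simp_all add: numeral_eq_Suc)
  show "x 1 + 1 < x 4"
    using shift_gt[OF second, of 1] by (simp add: numeral_eq_Suc)
qed

lemma two_fifths_orbit_of_periodic:
  assumes strict: "strict_mono F" and moves: "\<And>x. x < F x"
    and semiconj: "\<And>y. g (frac y) = frac (F y)"
    and \<alpha>: "\<alpha> \<in> {0..<1}" "(F ^^ 5) \<alpha> = \<alpha> + 2"
  shows "\<exists>a. two_fifths_orbit g a"
proof -
  define x where "x = (\<lambda>k. (F ^^ k) \<alpha>)"
  note order = periodic_orbit_interleaving[OF strict moves \<alpha>(2), folded x_def]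
  have x_Suc: "x (Suc k) = F (x k)" for k
    by (simp add: x_def)
  have x5: "x 5 = x 0 + 2" using \<alpha>(2) by (simp add: x_def)
  have F_diff_one: "F (y - 1) = F y - 1" for y
    using add_of_int[of y "- 1"] by simp
  have "g (frac (x 0)) = frac (x 1)" "g (frac (x 3 - 1)) = frac (x 4 - 1)"
    "g (frac (x 1)) = frac (x 2)" "g (frac (x 4 - 1)) = frac (x 0)"
    "g (frac (x 2)) = frac (x 3 - 1)"
    using x5 frac_add_of_int_right[of "x 0" 2]
    by (simp_all add: semiconj x_Suc[symmetric] F_diff_one frac_diff_one eval_nat_numeral)
  then show ?thesis
    using two_fifths_orbit_of_cyclic_order[of "x 0" "x 3 - 1" "x 1" "x 4 - 1" "x 2" g] \<alpha>(1) order
    by (simp add: x_def)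
qed

end

section \<open>Chords through a point of the disk\<close>

lemma sgn_cos:
  fixes u :: real
  assumes "- (pi / 2) < u" "u < 3 * pi / 2"
  shows "sgn (cos u) = sgn (pi / 2 - u)"
proof (cases u "pi / 2" rule: linorder_cases)
  case less
  then show ?thesis using cos_gt_zero_pi[of u] assms by simp
next
  case greater
  then show ?thesis using cos_lt_zero_pi[of u] assms by simp
next
  case equal
  then show ?thesis unfolding equal by simp
qed

lemma circ_add_of_int: "circ (x + of_int k) = circ x"
proof -
  have "circ (x + of_int k) = circ x * cis (2 * pi * of_int k)"
    unfolding circ_def by (simp add: cis_mult algebra_simps)
  then show ?thesis by simp
qed

lemma cross3_antisym: "cross3 a b z = - cross3 b a z"
  unfolding cross3_def by (simp add: algebra_simps)

text \<open>Rotating by -x moves circ x to 1 and V to z; the chord from 1 through z ends at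
  angle 2 pi t with cot (pi t) = Im z / (1 - Re z), cf. cross3_circ_add below.\<close>
definition chord_turn :: "complex \<Rightarrow> real \<Rightarrow> real" where
  "chord_turn V x = (let z = V * cis (- 2 * pi * x) in 1 / 2 - arctan (Im z / (1 - Re z)) / pi)"

definition chord_end :: "complex \<Rightarrow> real \<Rightarrow> real" where
  "chord_end V x = x + chord_turn V x"

lemma cross3_circ_add:
  fixes V :: complex and x t :: real
  defines "z \<equiv> V * cis (- 2 * pi * x)"
  shows "cross3 (circ x) (circ (x + t)) V
    = 2 * sin (pi * t) * ((1 - Re z) * cos (pi * t) - Im z * sin (pi * t))"
proof -
  have "sin (2 * pi * x) ^ 2 + cos (2 * pi * x) ^ 2 = 1" "sin (pi * t) ^ 2 + cos (pi * t) ^ 2 = 1"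
    by simp_all
  moreover have "2 * pi * (x + t) = 2 * pi * x + 2 * (pi * t)"
    by (simp add: algebra_simps)
  ultimately show ?thesis
    unfolding cross3_def circ_def z_def
    by (simp only: cis.ctr cos_add sin_add sin_double cos_double complex_cnj_diff complex.sel
        minus_complex.sel times_complex.sel cnj.sel cos_minus sin_minus mult_minus_left) algebra
qed

lemma chord_turn_bounds: "0 < chord_turn V x" "chord_turn V x < 1"
proof -
  have "0 < 1 / 2 - a / pi \<and> 1 / 2 - a / pi < 1" if "- (pi / 2) < a" "a < pi / 2" for a
    using that by (simp add: field_simps)
  then show "0 < chord_turn V x" "chord_turn V x < 1"
    unfolding chord_turn_def Let_def using arctan_lbound arctan_ubound by auto
qed

lemma sgn_cross3_circ_add:
  assumes "norm V < 1" "0 < t" "t < 1"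
  shows "sgn (cross3 (circ x) (circ (x + t)) V) = sgn (chord_turn V x - t)"
proof -
  define z where "z = V * cis (- 2 * pi * x)"
  define A B where "A = 1 - Re z" and "B = Im z"
  define \<theta> where "\<theta> = arctan (B / A)"
  have "0 < A"
    using complex_Re_le_cmod[of z] assms(1) by (simp add: A_def z_def norm_mult)
  have \<theta>: "- (pi / 2) < \<theta>" "\<theta> < pi / 2"
    using arctan_lbound arctan_ubound by (simp_all add: \<theta>_def)
  then have "0 < cos \<theta>" by (rule cos_gt_zero_pi)
  have "B = A * sin \<theta> / cos \<theta>"
    using tan_arctan[of "B / A"] \<open>0 < A\<close> by (simp add: \<theta>_def tan_def field_simps)
  then have "A * cos (pi * t) - B * sin (pi * t) = A / cos \<theta> * cos (pi * t + \<theta>)"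
    using \<open>0 < cos \<theta>\<close> by (simp add: cos_add field_simps)
  moreover have "sgn (cos (pi * t + \<theta>)) = sgn (chord_turn V x - t)"
  proof -
    have "chord_turn V x = 1 / 2 - \<theta> / pi"
      by (simp add: chord_turn_def z_def A_def B_def \<theta>_def Let_def)
    then have "pi / 2 - (pi * t + \<theta>) = pi * (chord_turn V x - t)"
      by (simp add: field_simps)
    moreover have "0 < pi * t" "pi * t < pi" using assms(2,3) by simp_all
    then have "sgn (cos (pi * t + \<theta>)) = sgn (pi / 2 - (pi * t + \<theta>))"
      by (intro sgn_cos) (use \<theta> in linarith)+
    ultimately show ?thesis by (simp add: sgn_mult)
  qed
  moreover have "0 < sin (pi * t)" using assms(2,3) by (intro sin_gt_zero) auto
  ultimately show ?thesis
    using \<open>0 < A\<close> \<open>0 < cos \<theta>\<close>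
    by (simp add: cross3_circ_add A_def B_def z_def sgn_mult)
qed

lemma cross3_circ_add_eq_0_iff:
  assumes "norm V < 1" "0 < t" "t < 1"
  shows "cross3 (circ x) (circ (x + t)) V = 0 \<longleftrightarrow> t = chord_turn V x"
  using sgn_cross3_circ_add[OF assms, of x] by (metis sgn_0_0 right_minus_eq)

lemma cross3_circ_add_nonneg_iff:
  assumes "norm V < 1" "0 < t" "t < 1"
  shows "0 \<le> cross3 (circ x) (circ (x + t)) V \<longleftrightarrow> t \<le> chord_turn V x"
  using sgn_cross3_circ_add[OF assms, of x] by (metis zero_le_sgn_iff diff_ge_0_iff_ge)

lemma chord_turn_add_of_int: "chord_turn V (x + of_int k) = chord_turn V x"
proof -
  have "cis (- 2 * pi * (x + of_int k)) = cis (- 2 * pi * x) * cis (2 * pi * of_int (- k))"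
    by (simp add: cis_mult algebra_simps)
  then show ?thesis by (simp add: chord_turn_def)
qed

lemma chord_end_add_of_int: "chord_end V (x + of_int k) = chord_end V x + of_int k"
  by (simp add: chord_end_def chord_turn_add_of_int)

lemma continuous_chord_end:
  assumes "norm V < 1"
  shows "continuous_on UNIV (chord_end V)"
proof -
  have "1 - Re (V * cis (- 2 * pi * x)) \<noteq> 0" for x
    using complex_Re_le_cmod[of "V * cis (- 2 * pi * x)"] assms by (auto simp: norm_mult)
  then show ?thesis
    unfolding chord_end_def chord_turn_def Let_def by (intro continuous_intros) auto
qed

lemma chord_end_chord_end:
  assumes "norm V < 1"
  shows "chord_end V (chord_end V x) = x + 1"
proof -
  define t where "t = chord_turn V x"
  have t: "0 < t" "t < 1" using chord_turn_bounds by (simp_all add: t_def)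
  have "cross3 (circ x) (circ (x + t)) V = 0"
    using cross3_circ_add_eq_0_iff[OF assms t] by (simp add: t_def)
  moreover have "circ ((x + t) + (1 - t)) = circ x"
    using circ_add_of_int[of x 1] by simp
  ultimately have "cross3 (circ (x + t)) (circ ((x + t) + (1 - t))) V = 0"
    using cross3_antisym[of "circ (x + t)" "circ x" V] by simp
  then have "1 - t = chord_turn V (x + t)"
    using cross3_circ_add_eq_0_iff[OF assms, of "1 - t" "x + t"] t by simp
  then show ?thesis by (simp add: chord_end_def t_def)
qed

lemma strict_mono_chord_end:
  assumes "norm V < 1"
  shows "strict_mono (chord_end V)"
proof
  fix x y :: real assume "x < y"
  have "inj (chord_end V)"
    by (metis chord_end_chord_end[OF assms] add_right_cancel injI)
  then have "chord_end V x < chord_end V y \<and> chord_end V y < chord_end V (y + 1) \<or>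
      chord_end V (y + 1) < chord_end V y \<and> chord_end V y < chord_end V x"
    using continuous_inj_imp_mono[of x y "y + 1" "chord_end V"] \<open>x < y\<close>
      continuous_on_subset[OF continuous_chord_end[OF assms]] inj_on_subset
    by (metis subset_UNIV less_add_one)
  moreover have "chord_end V (y + 1) = chord_end V y + 1"
    using chord_end_add_of_int[of V y 1] by simp
  ultimately show "chord_end V x < chord_end V y" by auto
qed

section \<open>Polygons in the disk\<close>

lemma cross3_eq_inner: "cross3 a b z = inner (\<i> * (b - a)) z - inner (\<i> * (b - a)) a"
  by (simp add: cross3_def inner_complex_def algebra_simps)

text \<open>Both the closed and the open half-plane to the left of a line are convex.\<close>
lemma convex_hull_supporting_line_iff:
  "((\<exists>u\<in>convex hull S. cross3 a b u = 0) \<and> (\<forall>u\<in>convex hull S. 0 \<le> cross3 a b u)) \<longleftrightarrow>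
   ((\<exists>u\<in>S. cross3 a b u = 0) \<and> (\<forall>u\<in>S. 0 \<le> cross3 a b u))"
proof -
  define n where "n = \<i> * (b - a)"
  have cross: "cross3 a b u = inner n u - inner n a" for u
    unfolding n_def by (rule cross3_eq_inner)
  have nonneg: "\<forall>u\<in>convex hull S. 0 \<le> cross3 a b u" if "\<forall>u\<in>S. 0 \<le> cross3 a b u"
  proof -
    have "S \<subseteq> {u. inner n u \<ge> inner n a}" using that by (simp add: cross subset_eq)
    then have "convex hull S \<subseteq> {u. inner n u \<ge> inner n a}"
      by (rule hull_minimal) (rule convex_halfspace_ge)
    then show ?thesis by (simp add: cross subset_eq)
  qed
  have pos: "\<forall>u\<in>convex hull S. 0 < cross3 a b u" if "\<forall>u\<in>S. 0 < cross3 a b u"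
  proof -
    have "S \<subseteq> {u. inner n u > inner n a}" using that by (simp add: cross subset_eq)
    then have "convex hull S \<subseteq> {u. inner n u > inner n a}"
      by (rule hull_minimal) (rule convex_halfspace_gt)
    then show ?thesis by (simp add: cross subset_eq)
  qed
  have S_hull: "S \<subseteq> convex hull S" by (rule hull_subset)
  show ?thesis
  proof
    assume hull: "(\<exists>u\<in>convex hull S. cross3 a b u = 0) \<and> (\<forall>u\<in>convex hull S. 0 \<le> cross3 a b u)"
    then have S_nonneg: "\<forall>u\<in>S. 0 \<le> cross3 a b u" using S_hull by blast
    moreover have "\<exists>u\<in>S. cross3 a b u = 0"
    proof (rule ccontr)
      assume "\<not> (\<exists>u\<in>S. cross3 a b u = 0)"
      with S_nonneg have "\<forall>u\<in>S. 0 < cross3 a b u"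
        by (simp add: order_le_less)
      with pos hull show False by force
    qed
    ultimately show "(\<exists>u\<in>S. cross3 a b u = 0) \<and> (\<forall>u\<in>S. 0 \<le> cross3 a b u)" by blast
  next
    assume "(\<exists>u\<in>S. cross3 a b u = 0) \<and> (\<forall>u\<in>S. 0 \<le> cross3 a b u)"
    with nonneg S_hull
    show "(\<exists>u\<in>convex hull S. cross3 a b u = 0) \<and> (\<forall>u\<in>convex hull S. 0 \<le> cross3 a b u)"
      by blast
  qed
qed

definition polygon_lift :: "complex set \<Rightarrow> real \<Rightarrow> real" where
  "polygon_lift S x = (MIN V\<in>S. chord_end V x)"

locale disk_polygon =
  fixes S :: "complex set"
  assumes finite: "finite S" and nonempty: "S \<noteq> {}"
    and in_disk: "V \<in> S \<Longrightarrow> norm V < 1"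
begin

lemma polygon_lift_le: "V \<in> S \<Longrightarrow> polygon_lift S x \<le> chord_end V x"
  by (simp add: polygon_lift_def finite)

lemma polygon_lift_vertex:
  obtains V where "V \<in> S" "polygon_lift S x = chord_end V x"
proof -
  have "polygon_lift S x \<in> (\<lambda>V. chord_end V x) ` S"
    unfolding polygon_lift_def using finite nonempty by (intro Min_in) auto
  then show thesis using that by blast
qed

lemma polygon_lift_eq: "polygon_lift S x = x + (MIN V\<in>S. chord_turn V x)"
  using Min_add_commute[OF finite nonempty, of "\<lambda>V. chord_turn V x" x]
  by (simp add: polygon_lift_def chord_end_def add.commute)

lemma polygon_lift_bounds: "x < polygon_lift S x" "polygon_lift S x < x + 1"
proof -
  obtain V where "V \<in> S" "polygon_lift S x = chord_end V x" by (rule polygon_lift_vertex)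
  then show "x < polygon_lift S x" "polygon_lift S x < x + 1"
    using chord_turn_bounds[of V x] by (simp_all add: chord_end_def)
qed

lemma polygon_lift_add_of_int: "polygon_lift S (x + of_int k) = polygon_lift S x + of_int k"
  using Min_add_commute[OF finite nonempty, of "\<lambda>V. chord_end V x" "of_int k"]
  by (simp add: polygon_lift_def chord_end_add_of_int)

lemma strict_mono_polygon_lift: "strict_mono (polygon_lift S)"
proof
  fix x y :: real assume "x < y"
  obtain V where "V \<in> S" "polygon_lift S y = chord_end V y" by (rule polygon_lift_vertex)
  then show "polygon_lift S x < polygon_lift S y"
    using polygon_lift_le[of V x] strict_mono_chord_end[OF in_disk] \<open>x < y\<close>
    by (metis order.strict_trans1 strict_monoD)
qed

lemma continuous_polygon_lift: "continuous_on UNIV (polygon_lift S)"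
proof -
  have "continuous_on UNIV (\<lambda>x. MIN V\<in>T. chord_end V x)" if "finite T" "T \<noteq> {}" "T \<subseteq> S" for T
    using that
  proof (induction T rule: finite_ne_induct)
    case (singleton V)
    then show ?case using continuous_chord_end[OF in_disk] by (simp add: fun_eq_iff)
  next
    case (insert V T)
    then show ?case
      using continuous_chord_end[OF in_disk, of V]
      by (simp add: continuous_on_min)
  qed
  from this[OF finite nonempty] show ?thesis by (simp add: polygon_lift_def[abs_def])
qed

sublocale lift: degree_one_lift "polygon_lift S"
proof
  show "mono (polygon_lift S)" using strict_mono_polygon_lift by (rule strict_mono_mono)
  show "polygon_lift S (x + 1) = polygon_lift S x + 1" for x
    using polygon_lift_add_of_int[of x 1] by simp
qed (use polygon_lift_bounds in \<open>simp_all add: less_imp_le\<close>)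

lemma polygon_lift_supporting_line_iff:
  assumes "0 < t" "t < 1"
  shows "((\<exists>u\<in>convex hull S. cross3 (circ v) (circ (v + t)) u = 0) \<and>
      (\<forall>u\<in>convex hull S. 0 \<le> cross3 (circ v) (circ (v + t)) u))
    \<longleftrightarrow> t = polygon_lift S v - v"
proof -
  have "t = polygon_lift S v - v \<longleftrightarrow> (\<exists>V\<in>S. t = chord_turn V v) \<and> (\<forall>V\<in>S. t \<le> chord_turn V v)"
    using eq_Min_iff[of "(\<lambda>V. chord_turn V v) ` S" t] finite nonempty
    by (auto simp: polygon_lift_eq)
  then show ?thesis
    unfolding convex_hull_supporting_line_iff
    using cross3_circ_add_eq_0_iff[OF in_disk assms] cross3_circ_add_nonneg_iff[OF in_disk assms]
    by auto
qed

lemma psi_hull_eq: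
  assumes v: "v \<in> {0..<1}"
  shows "psi (convex hull S) v = frac (polygon_lift S v)"
  unfolding psi_def
proof (rule the_equality)
  define t where "t = polygon_lift S v - v"
  have t: "0 < t" "t < 1" using polygon_lift_bounds[of v] by (simp_all add: t_def)
  have "circ (frac (polygon_lift S v)) = circ (v + t)"
    using circ_add_of_int[of "frac (polygon_lift S v)" "\<lfloor>polygon_lift S v\<rfloor>"]
    by (simp add: t_def frac_def)
  moreover have "frac (polygon_lift S v) \<noteq> v"
  proof
    assume "frac (polygon_lift S v) = v"
    then have "t \<in> \<int>" using frac_unique_iff[of "polygon_lift S v" v] by (simp add: t_def)
    with t show False
      by (metis Ints_cases of_int_0_less_iff of_int_less_1_iff not_less int_one_le_iff_zero_less)
  qed
  ultimately show "frac (polygon_lift S v) \<in> {0..<1} \<and> frac (polygon_lift S v) \<noteq> v \<and>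
      (\<exists>u\<in>convex hull S. cross3 (circ v) (circ (frac (polygon_lift S v))) u = 0) \<and>
      (\<forall>u\<in>convex hull S. 0 \<le> cross3 (circ v) (circ (frac (polygon_lift S v))) u)"
    using polygon_lift_supporting_line_iff[OF t, of v] by (simp add: t_def frac_lt_1)
next
  fix w assume w: "w \<in> {0..<1} \<and> w \<noteq> v \<and>
    (\<exists>u\<in>convex hull S. cross3 (circ v) (circ w) u = 0) \<and>
    (\<forall>u\<in>convex hull S. 0 \<le> cross3 (circ v) (circ w) u)"
  define t where "t = (if v < w then w - v else w - v + 1)"
  have t: "0 < t" "t < 1" using w v by (auto simp: t_def)
  have "circ w = circ (v + t)"
    using circ_add_of_int[of w 1] by (simp add: t_def)
  then have "t = polygon_lift S v - v"
    using polygon_lift_supporting_line_iff[OF t, of v] w by simp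
  then have "polygon_lift S v - w = (if v < w then 0 else 1)"
    by (auto simp: t_def split: if_splits)
  then have "polygon_lift S v - w \<in> \<int>"
    by simp
  then show "w = frac (polygon_lift S v)"
    using w frac_unique_iff[of "polygon_lift S v" w] by simp
qed

lemma psi_hull_frac: "psi (convex hull S) (frac y) = frac (polygon_lift S y)"
proof -
  have "psi (convex hull S) (frac y) = frac (polygon_lift S (frac y))"
    using psi_hull_eq[of "frac y"] by (simp add: frac_lt_1)
  also have "polygon_lift S (frac y) = polygon_lift S y + of_int (- \<lfloor>y\<rfloor>)"
    using polygon_lift_add_of_int[of y "- \<lfloor>y\<rfloor>"] by (simp add: frac_def)
  finally show ?thesis by (simp only: frac_add_of_int_right)
qed

lemma lift_psi_hull: "lift (psi (convex hull S)) = polygon_lift S"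
  using continuous_polygon_lift psi_hull_frac polygon_lift_bounds[of 0]
  by (intro lift_eqI) simp_all

lemma strict_mono_orbit: "strict_mono (\<lambda>k. (polygon_lift S ^^ k) x)"
  using polygon_lift_bounds by (simp add: strict_mono_Suc_iff)

lemma funpow_polygon_lift_le: "V \<in> S \<Longrightarrow> (polygon_lift S ^^ n) x \<le> (chord_end V ^^ n) x"
proof (induction n)
  case (Suc n)
  have "polygon_lift S ((polygon_lift S ^^ n) x) \<le> chord_end V ((polygon_lift S ^^ n) x)"
    using Suc.prems by (rule polygon_lift_le)
  also have "\<dots> \<le> chord_end V ((chord_end V ^^ n) x)"
    using Suc strict_mono_mono[OF strict_mono_chord_end[OF in_disk]] by (simp add: monoD)
  finally show ?case by simp
qed simp

text \<open>The chord through V from an end point returns to the start point, so an orbit going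
  once around the circle in n \<ge> 3 steps cannot follow two supporting lines through the
  same vertex: the second one would close the turn too early.\<close>
lemma full_turn_no_repeated_vertex:
  assumes turn: "(polygon_lift S ^^ n) x = x + 1" and "3 \<le> n" and "i < j" "j < n"
    and "V \<in> S"
    and step_i: "(polygon_lift S ^^ Suc i) x = chord_end V ((polygon_lift S ^^ i) x)"
    and step_j: "(polygon_lift S ^^ Suc j) x = chord_end V ((polygon_lift S ^^ j) x)"
  shows False
proof -
  define y where "y k = (polygon_lift S ^^ k) x" for k
  define W where "W = chord_end V"
  have y_less: "y k < y l" if "k < l" for k l
    using strict_mono_orbit[THEN strict_monoD, OF that] by (simp add: y_def)
  have y_le: "y k \<le> y l" if "k \<le> l" for k l
    using y_less[of k l] that by (cases "k = l") auto
  have yn: "y n = y 0 + 1" using turn by (simp add: y_def)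
  have "norm V < 1" using \<open>V \<in> S\<close> by (rule in_disk)
  then have W_W: "W (W z) = z + 1" and W_less: "z < z' \<Longrightarrow> W z < W z'"
    and W_le: "z \<le> z' \<Longrightarrow> W z \<le> W z'" for z z'
    using chord_end_chord_end strict_mono_chord_end
    by (auto simp: W_def strict_monoD strict_mono_less_eq)
  have yi: "y (Suc i) = W (y i)" and yj: "y (Suc j) = W (y j)"
    using step_i step_j by (simp_all add: y_def W_def)
  have lower: "y i + 1 \<le> y (Suc j)"
    using W_le[OF y_le[of "Suc i" j]] \<open>i < j\<close> W_W[of "y i"] yi yj by simp
  moreover have "y (Suc j) \<le> y 0 + 1" using y_le[of "Suc j" n] \<open>j < n\<close> yn by simp
  ultimately have "i = 0" using y_less[of 0 i] by (cases "i = 0") auto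
  have "Suc j = n"
  proof (rule ccontr)
    assume "Suc j \<noteq> n"
    with \<open>j < n\<close> have "y (Suc j) < y n" by (intro y_less) simp
    with lower \<open>i = 0\<close> yn show False by simp
  qed
  then have "W (y 1) < W (y j)" using W_less y_less[of 1 j] \<open>3 \<le> n\<close> by simp
  then show False using W_W[of "y 0"] yi yj yn \<open>i = 0\<close> \<open>Suc j = n\<close> by simp
qed

lemma card_ge_of_full_turn:
  assumes turn: "(polygon_lift S ^^ n) x = x + 1" and "3 \<le> n"
  shows "n \<le> card S"
proof -
  have "\<forall>z. \<exists>V. V \<in> S \<and> polygon_lift S z = chord_end V z"
    using polygon_lift_vertex by blast
  then obtain vertex where "\<And>z. vertex z \<in> S \<and> polygon_lift S z = chord_end (vertex z) z"
    by metis
  then obtain g where g: "\<And>k. g k \<in> S"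
    "\<And>k. (polygon_lift S ^^ Suc k) x = chord_end (g k) ((polygon_lift S ^^ k) x)"
    by fastforce
  have "inj_on g {..<n}"
  proof (rule inj_onI)
    fix i j assume "i \<in> {..<n}" "j \<in> {..<n}" "g i = g j"
    then show "i = j"
      using full_turn_no_repeated_vertex[OF assms, of i j "g i"]
        full_turn_no_repeated_vertex[OF assms, of j i "g i"] g
      by (cases i j rule: linorder_cases) auto
  qed
  then show ?thesis
    using card_inj_on_le[of g "{..<n}" S] g(1) finite by auto
qed

lemma funpow5_polygon_lift_eq:
  assumes "card S \<le> 4" and m: "(polygon_lift S ^^ 5) x = x + of_int m"
  shows "m = 2"
proof -
  have "x < (polygon_lift S ^^ 5) x"
    using strict_monoD[OF strict_mono_orbit, of 0 5] by simp
  then have "1 \<le> m" using m by simp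
  obtain V where "V \<in> S" using nonempty by blast
  then have W: "norm V < 1" by (rule in_disk)
  have "chord_end V (y + 1) = chord_end V y + 1" "chord_end V (2 + y) = chord_end V y + 2" for y
    using chord_end_add_of_int[of V y 1] chord_end_add_of_int[of V y 2] by (simp_all add: add.commute)
  then have "(chord_end V ^^ 5) x = chord_end V x + 2"
    using chord_end_chord_end[OF W] by (simp add: numeral_eq_Suc)
  then have "(polygon_lift S ^^ 5) x < x + 3"
    using funpow_polygon_lift_le[OF \<open>V \<in> S\<close>, of 5 x] chord_turn_bounds[of V x]
    by (simp add: chord_end_def)
  then have "m < 3" using m by simp
  moreover have "m \<noteq> 1"
  proof
    assume "m = 1"
    then have "5 \<le> card S" using card_ge_of_full_turn[of 5 x] m by simp
    with assms(1) show False by simp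
  qed
  ultimately show ?thesis using \<open>1 \<le> m\<close> by simp
qed

lemma psi_hull_funpow5_fixed_iff:
  assumes "card S \<le> 4"
  shows "(\<exists>\<alpha>\<in>{0..<1}. (psi (convex hull S) ^^ 5) \<alpha> = \<alpha>) \<longleftrightarrow>
    (\<exists>\<alpha>\<in>{0..<1}. (polygon_lift S ^^ 5) \<alpha> = \<alpha> + 2)"
proof -
  have iter: "(psi (convex hull S) ^^ 5) \<alpha> = frac ((polygon_lift S ^^ 5) \<alpha>)"
    if "\<alpha> \<in> {0..<1}" for \<alpha>
    using funpow_frac_semiconj[of "psi (convex hull S)" "polygon_lift S" 5 \<alpha>] psi_hull_frac that
    by simp
  show ?thesis
  proof
    assume "\<exists>\<alpha>\<in>{0..<1}. (psi (convex hull S) ^^ 5) \<alpha> = \<alpha>"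
    then obtain \<alpha> where \<alpha>: "\<alpha> \<in> {0..<1}" "frac ((polygon_lift S ^^ 5) \<alpha>) = frac \<alpha>"
      using iter by fastforce
    then obtain m where "(polygon_lift S ^^ 5) \<alpha> = \<alpha> + of_int m" by (elim frac_eqE)
    with funpow5_polygon_lift_eq[OF assms] \<alpha>(1)
    show "\<exists>\<alpha>\<in>{0..<1}. (polygon_lift S ^^ 5) \<alpha> = \<alpha> + 2" by fastforce
  next
    assume "\<exists>\<alpha>\<in>{0..<1}. (polygon_lift S ^^ 5) \<alpha> = \<alpha> + 2"
    then obtain \<alpha> where "\<alpha> \<in> {0..<1}" "(polygon_lift S ^^ 5) \<alpha> = \<alpha> + of_int 2" by auto
    with iter show "\<exists>\<alpha>\<in>{0..<1}. (psi (convex hull S) ^^ 5) \<alpha> = \<alpha>"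
      by (metis frac_add_of_int_right frac_eq_id)
  qed
qed

lemma two_fifths_orbit_psi_hull_iff:
  assumes "card S \<le> 4"
  shows "(\<exists>a. two_fifths_orbit (psi (convex hull S)) a) \<longleftrightarrow>
    (\<exists>\<alpha>\<in>{0..<1}. (polygon_lift S ^^ 5) \<alpha> = \<alpha> + 2)"
proof
  assume "\<exists>a. two_fifths_orbit (psi (convex hull S)) a"
  then obtain a where a: "two_fifths_orbit (psi (convex hull S)) a" ..
  then have "a 0 \<in> {0..<1}" by (simp add: two_fifths_orbit_def)
  with two_fifths_orbit_funpow[OF a] psi_hull_funpow5_fixed_iff[OF assms]
  show "\<exists>\<alpha>\<in>{0..<1}. (polygon_lift S ^^ 5) \<alpha> = \<alpha> + 2" by blast
next
  assume "\<exists>\<alpha>\<in>{0..<1}. (polygon_lift S ^^ 5) \<alpha> = \<alpha> + 2"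
  then obtain \<alpha> where "\<alpha> \<in> {0..<1}" "(polygon_lift S ^^ 5) \<alpha> = \<alpha> + 2" by blast
  then show "\<exists>a. two_fifths_orbit (psi (convex hull S)) a"
    by (intro lift.two_fifths_orbit_of_periodic[OF strict_mono_polygon_lift polygon_lift_bounds(1)])
      (simp_all add: psi_hull_frac)
qed

end

theorem lemma4p1:
  fixes P Q R :: complex
  assumes "norm P < 1" "norm Q < 1" "norm R < 1"
    and "\<not> collinear {P, Q, R}"
  defines "\<psi> \<equiv> psi (convex hull {P, Q, R})"
  shows "((\<exists>\<alpha>\<in>{0..<1}. (\<psi> ^^ 5) \<alpha> = \<alpha>) \<longleftrightarrow> rot_num \<psi> = 2/5)
    \<and> (rot_num \<psi> = 2/5 \<longleftrightarrow>
         (\<exists>a :: nat \<Rightarrow> real. (\<forall>i<5. a i \<in> {0..<1}) \<and> (\<forall>i<4. a i < a (Suc i)) \<and>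
            (\<forall>i<5. \<psi> (frac (a i)) = frac (a ((i + 2) mod 5)))))
    \<and> ((\<exists>a :: nat \<Rightarrow> real. (\<forall>i<5. a i \<in> {0..<1}) \<and> (\<forall>i<4. a i < a (Suc i)) \<and>
            (\<forall>i<5. \<psi> (frac (a i)) = frac (a ((i + 2) mod 5))))
         \<longleftrightarrow> (\<exists>\<alpha>\<in>{0..<1}. \<forall>x. frac x = \<alpha> \<longrightarrow> ((lift \<psi>) ^^ 5) x = x + 2))"
proof -
  interpret disk_polygon "{P, Q, R}" using assms(1-3) by unfold_locales auto
  let ?L = "polygon_lift {P, Q, R}"
  let ?periodic = "\<exists>\<alpha>\<in>{0..<1}. (?L ^^ 5) \<alpha> = \<alpha> + 2"
  have card: "card {P, Q, R} \<le> 4" by (simp add: card_insert_if)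
  have fixed: "(\<exists>\<alpha>\<in>{0..<1}. (\<psi> ^^ 5) \<alpha> = \<alpha>) \<longleftrightarrow> ?periodic"
    unfolding \<psi>_def using card by (rule psi_hull_funpow5_fixed_iff)
  have rot: "rot_num \<psi> = 2/5 \<longleftrightarrow> ?periodic"
    using lift.rotation_number_eq_iff[OF continuous_polygon_lift, of 5 2]
    by (simp add: \<psi>_def lift.rot_num_eq_rotation_number[OF lift_psi_hull])
  have orbit: "(\<exists>a. two_fifths_orbit \<psi> a) \<longleftrightarrow> ?periodic"
    unfolding \<psi>_def using card by (rule two_fifths_orbit_psi_hull_iff)
  have lifted: "(\<exists>\<alpha>\<in>{0..<1}. \<forall>x. frac x = \<alpha> \<longrightarrow> ((lift \<psi>) ^^ 5) x = x + 2) \<longleftrightarrow> ?periodic"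
    using lift.funpow_eq_add_on_fibre[of _ 5 2] by (simp add: \<psi>_def lift_psi_hull)
  show ?thesis using fixed rot orbit lifted unfolding two_fifths_orbit_def by blast
qed

end
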